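(* Let $(M,\cdot)$ be a moving semigroup and $A\subseteq M$. Then $A$ is DIP if and only if there is a nonprincipal idempotent ultrafilter $\mathcal{U}$ on $M$ with $A\in\mathcal{U}$.
   Context: $\beta M$ is the Stone–Čech compactification of the discrete semigroup $M$ (the space of ultrafilters on $M$, with principal ultrafilters identified with elements of $M$), equipped with the usual extension of the semigroup operation. $(M,\cdot)$ is moving if $\beta M\setminus M$ is a subsemigroup of $\beta M$. An ultrafilter $\mathcal{U}$ is idempotent if $\mathcal{U}\cdot\mathcal{U}=\mathcal{U}$ in $\beta M$. For a sequence $(x_n)$ in $M$, $\mathrm{FP}(x_n)=\{x_{i_1}\cdots x_{i_k}: k\ge1,\ i_1<\cdots<i_k\}$. A set $A\subseteq M$ is DIP (distinctly IP) if there is an injective sequence $(x_n)$ in $M$ with $\mathrm{FP}(x_n)\subseteq A$. *)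

theory Defs
  imports Main
begin

definition is_ultrafilter :: "'a set set \<Rightarrow> bool" where
  "is_ultrafilter U \<longleftrightarrow>
     UNIV \<in> U \<and> {} \<notin> U \<and>
     (\<forall>A B. A \<in> U \<and> B \<in> U \<longrightarrow> A \<inter> B \<in> U) \<and>
     (\<forall>A B. A \<in> U \<and> A \<subseteq> B \<longrightarrow> B \<in> U) \<and>
     (\<forall>A. A \<in> U \<or> - A \<in> U)"

definition principal_uf :: "'a \<Rightarrow> 'a set set" where
  "principal_uf x = {A. x \<in> A}"

definition nonprincipal :: "'a set set \<Rightarrow> bool" where
  "nonprincipal U \<longleftrightarrow> (\<forall>x. U \<noteq> principal_uf x)"

definition uf_mult :: "'a::semigroup_mult set set \<Rightarrow> 'a set set \<Rightarrow> 'a set set" where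
  "uf_mult U V = {A. {x. {y. x * y \<in> A} \<in> V} \<in> U}"

definition idempotent_uf :: "'a::semigroup_mult set set \<Rightarrow> bool" where
  "idempotent_uf U \<longleftrightarrow> uf_mult U U = U"

text \<open>Moving: beta M \ M is a subsemigroup of beta M.\<close>
definition moving :: "'a::semigroup_mult itself \<Rightarrow> bool" where
  "moving (t::'a itself) \<longleftrightarrow> (\<forall>(U::'a set set) V. is_ultrafilter U \<and> nonprincipal U \<and> is_ultrafilter V \<and> nonprincipal V
      \<longrightarrow> nonprincipal (uf_mult U V))"

fun lprod :: "'a::semigroup_mult list \<Rightarrow> 'a" where
  "lprod [a] = a"
| "lprod (a # b # l) = a * lprod (b # l)"
| "lprod [] = undefined"

definition FP :: "(nat \<Rightarrow> 'a::semigroup_mult) \<Rightarrow> 'a set" where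
  "FP x = {lprod (map x is) | is. is \<noteq> [] \<and> sorted_wrt (<) is}"

definition DIP :: "'a::semigroup_mult set \<Rightarrow> bool" where
  "DIP A \<longleftrightarrow> (\<exists>x. inj x \<and> FP x \<subseteq> A)"

end

theory Submission imports Defs begin

text \<open>
  If \<open>U\<close> is a nonprincipal idempotent ultrafilter and \<open>A \<in> U\<close>, then
  \<open>A\<^sup>* = {x \<in> A. x\<^sup>-\<^sup>1A \<in> U}\<close> again lies in \<open>U\<close> and satisfies \<open>x\<^sup>-\<^sup>1A\<^sup>* \<in> U\<close> for all \<open>x \<in> A\<^sup>*\<close>
  (Galvin--Glazer). So one can pick \<open>x\<^sub>0 \<in> A\<^sup>*\<close>, pass to \<open>(A\<^sup>* \<inter> x\<^sub>0\<^sup>-\<^sup>1A\<^sup>* - {x\<^sub>0})\<^sup>*\<close>, pick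
  \<open>x\<^sub>1\<close> there, and so on; all finite products of the \<open>x\<^sub>n\<close> stay in \<open>A\<close>, and removing each
  chosen point (possible as \<open>U\<close> is nonprincipal) makes the sequence injective.

  Conversely, if \<open>FP(x\<^sub>n) \<subseteq> A\<close> with \<open>x\<close> injective, the nonprincipal ultrafilters containing
  every tail \<open>FP(x\<^sub>n)\<^sub>n\<^sub>\<ge>\<^sub>m\<close> form a nonempty closed subset of \<open>\<beta>M\<close>; since \<open>M\<close> is moving it is
  closed under multiplication, so by the Ellis--Numakura lemma it contains an idempotent.
\<close>

lemma
  assumes "is_ultrafilter U"
  shows uf_UNIV: "UNIV \<in> U"
    and uf_empty: "{} \<notin> U"
    and uf_Int: "A \<in> U \<Longrightarrow> B \<in> U \<Longrightarrow> A \<inter> B \<in> U"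
    and uf_mono: "A \<in> U \<Longrightarrow> A \<subseteq> B \<Longrightarrow> B \<in> U"
    and uf_cases: "A \<in> U \<or> - A \<in> U"
  using assms unfolding is_ultrafilter_def by blast+

lemma uf_Compl_iff: "is_ultrafilter U \<Longrightarrow> - A \<in> U \<longleftrightarrow> A \<notin> U"
  by (metis Compl_disjoint uf_empty uf_Int uf_cases)

lemma uf_Inter: "finite S \<Longrightarrow> is_ultrafilter U \<Longrightarrow> S \<subseteq> U \<Longrightarrow> \<Inter>S \<in> U"
  by (induction S rule: finite_induct) (auto intro: uf_UNIV uf_Int)

lemma uf_eqI: "is_ultrafilter U \<Longrightarrow> is_ultrafilter V \<Longrightarrow> U \<subseteq> V \<Longrightarrow> U = V"
  by (metis subsetI subset_antisym uf_Compl_iff subsetD)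

lemma nonprincipal_Compl_singleton:
  assumes U: "is_ultrafilter U" "nonprincipal U"
  shows "- {a} \<in> U"
proof (rule ccontr)
  assume "- {a} \<notin> U"
  then have a: "{a} \<in> U" using uf_cases[OF U(1)] by blast
  have "U = principal_uf a" unfolding principal_uf_def
  proof (intro set_eqI iffI)
    fix B assume "B \<in> U"
    then have "B \<inter> {a} \<noteq> {}" using a uf_Int[OF U(1)] uf_empty[OF U(1)] by metis
    then show "B \<in> {A. a \<in> A}" by blast
  qed (use a uf_mono[OF U(1)] in blast)
  then show False using U(2) unfolding nonprincipal_def by blast
qed

lemma nonprincipalI: "(\<And>a. - {a} \<in> U) \<Longrightarrow> nonprincipal U"
  unfolding nonprincipal_def principal_uf_def by blast

section \<open>Existence of ultrafilters\<close>

definition fip :: "'a set set \<Rightarrow> bool" where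
  "fip G \<longleftrightarrow> (\<forall>S. finite S \<and> S \<subseteq> G \<longrightarrow> \<Inter>S \<noteq> {})"

lemma fip_insertE:
  assumes "\<not> fip (insert A H)"
  obtains S where "finite S" "S \<subseteq> H" "\<Inter>S \<inter> A = {}"
proof -
  obtain S where "finite S" "S \<subseteq> insert A H" "\<Inter>S = {}"
    using assms unfolding fip_def by blast
  then show ?thesis by (intro that[of "S - {A}"]) auto
qed

lemma maximal_fip_is_ultrafilter:
  assumes H: "fip H" and max: "\<And>X. fip X \<Longrightarrow> H \<subseteq> X \<Longrightarrow> X = H"
  shows "is_ultrafilter H"
proof -
  have Inter_nonempty: "\<Inter>S \<noteq> {}" if "finite S" "S \<subseteq> H" for S
    using H that unfolding fip_def by blast
  have cases: "A \<in> H \<or> - A \<in> H" for A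
  proof (rule ccontr)
    assume "\<not> (A \<in> H \<or> - A \<in> H)"
    then have "\<not> fip (insert A H)" "\<not> fip (insert (- A) H)"
      using max[of "insert A H"] max[of "insert (- A) H"] by blast+
    then obtain S T where "finite S" "S \<subseteq> H" "\<Inter>S \<inter> A = {}"
      and "finite T" "T \<subseteq> H" "\<Inter>T \<inter> - A = {}"
      by (meson fip_insertE)
    then show False using Inter_nonempty[of "S \<union> T"] by blast
  qed
  have empty: "{} \<notin> H" using Inter_nonempty[of "{{}}"] by auto
  show ?thesis unfolding is_ultrafilter_def
  proof (intro conjI allI impI cases)
    show "UNIV \<in> H" using cases[of UNIV] empty by simp
    show "{} \<notin> H" by (fact empty)
  next
    fix A B assume "A \<in> H \<and> B \<in> H"
    then show "A \<inter> B \<in> H"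
      using cases[of "A \<inter> B"] Inter_nonempty[of "{A, B, - (A \<inter> B)}"] by auto
  next
    fix A B assume "A \<in> H \<and> A \<subseteq> B"
    then show "B \<in> H" using cases[of B] Inter_nonempty[of "{A, - B}"] by auto
  qed
qed

lemma fip_imp_ultrafilter:
  assumes "fip G"
  obtains U where "is_ultrafilter U" "G \<subseteq> U"
proof -
  let ?\<A> = "{H. G \<subseteq> H \<and> fip H}"
  have "\<exists>M\<in>?\<A>. \<forall>X\<in>?\<A>. M \<subseteq> X \<longrightarrow> X = M"
  proof (rule subset_Zorn_nonempty)
    fix \<C> assume \<C>: "\<C> \<noteq> {}" "subset.chain ?\<A> \<C>"
    have "fip (\<Union>\<C>)" unfolding fip_def
    proof (intro allI impI)
      fix S assume S: "finite S \<and> S \<subseteq> \<Union>\<C>"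
      then obtain H where "H \<in> \<C>" "S \<subseteq> H"
        using finite_subset_Union_chain[of S \<C> ?\<A>] \<C> by blast
      then show "\<Inter>S \<noteq> {}" using \<C> S unfolding subset_chain_def fip_def by blast
    qed
    then show "\<Union>\<C> \<in> ?\<A>" using \<C> unfolding subset_chain_def by blast
  qed (use assms in blast)
  then obtain H where "G \<subseteq> H" "fip H" "\<And>X. fip X \<Longrightarrow> H \<subseteq> X \<Longrightarrow> X = H"
    by (metis (no_types, lifting) mem_Collect_eq order_trans)
  then show ?thesis using that maximal_fip_is_ultrafilter by blast
qed

section \<open>The semigroup \<open>\<beta>M\<close>\<close>

abbreviation left_quot :: "'a::semigroup_mult \<Rightarrow> 'a set \<Rightarrow> 'a set" where
  "left_quot y B \<equiv> {z. y * z \<in> B}"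

abbreviation uf_quot :: "'a::semigroup_mult set set \<Rightarrow> 'a set \<Rightarrow> 'a set" where
  "uf_quot V A \<equiv> {x. left_quot x A \<in> V}"

lemma in_uf_mult: "A \<in> uf_mult U V \<longleftrightarrow> uf_quot V A \<in> U"
  unfolding uf_mult_def by simp

lemma uf_quot_Compl:
  assumes "is_ultrafilter V"
  shows "uf_quot V (- A) = - uf_quot V A"
proof -
  have "left_quot x (- A) = - left_quot x A" for x by auto
  then show ?thesis using uf_Compl_iff[OF assms] by auto
qed

lemma uf_quot_Int:
  assumes "is_ultrafilter V"
  shows "uf_quot V (A \<inter> B) = uf_quot V A \<inter> uf_quot V B"
proof -
  have "left_quot x (A \<inter> B) = left_quot x A \<inter> left_quot x B" for x by auto
  then show ?thesis using uf_Int[OF assms] uf_mono[OF assms] by (auto simp del: Int_iff)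
qed

lemma uf_quot_mono:
  assumes "is_ultrafilter V" "A \<subseteq> B"
  shows "uf_quot V A \<subseteq> uf_quot V B"
proof -
  have "left_quot x A \<subseteq> left_quot x B" for x using assms(2) by auto
  then show ?thesis using uf_mono[OF assms(1)] by blast
qed

lemma is_ultrafilter_uf_mult:
  assumes U: "is_ultrafilter U" and V: "is_ultrafilter V"
  shows "is_ultrafilter (uf_mult U V)"
  unfolding is_ultrafilter_def in_uf_mult
proof (intro conjI allI impI)
  show "uf_quot V UNIV \<in> U" "uf_quot V {} \<notin> U"
    using uf_UNIV[OF U] uf_UNIV[OF V] uf_empty[OF U] uf_empty[OF V] by simp_all
next
  fix A B
  show "uf_quot V A \<in> U \<and> uf_quot V B \<in> U \<Longrightarrow> uf_quot V (A \<inter> B) \<in> U"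
    using uf_Int[OF U] uf_quot_Int[OF V] by simp
  show "uf_quot V A \<in> U \<and> A \<subseteq> B \<Longrightarrow> uf_quot V B \<in> U"
    using uf_mono[OF U] uf_quot_mono[OF V] by blast
  show "uf_quot V A \<in> U \<or> uf_quot V (- A) \<in> U"
    using uf_cases[OF U] uf_quot_Compl[OF V] by simp
qed

lemma uf_mult_assoc: "uf_mult (uf_mult U V) W = uf_mult U (uf_mult V W)"
  unfolding uf_mult_def by (simp add: mult.assoc)

section \<open>Closed sets of ultrafilters\<close>

text \<open>Closed subsets of \<open>\<beta>M\<close> are exactly the sets of all ultrafilters extending a given family.\<close>
definition uf_closed :: "'a set set set \<Rightarrow> bool" where
  "uf_closed T \<longleftrightarrow> (\<forall>U\<in>T. is_ultrafilter U) \<and> (\<forall>U. is_ultrafilter U \<and> \<Inter>T \<subseteq> U \<longrightarrow> U \<in> T)"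

lemma uf_closed_extensions: "uf_closed {U. is_ultrafilter U \<and> G \<subseteq> U}"
  unfolding uf_closed_def by blast

lemma uf_closed_Int: "uf_closed X \<Longrightarrow> uf_closed Y \<Longrightarrow> uf_closed (X \<inter> Y)"
  unfolding uf_closed_def by (meson Inter_anti_mono inf_le1 inf_le2 IntI IntD1 order_trans)

lemma uf_closed_Inter:
  assumes "\<C> \<noteq> {}" "\<And>T. T \<in> \<C> \<Longrightarrow> uf_closed T"
  shows "uf_closed (\<Inter>\<C>)"
  unfolding uf_closed_def
proof (intro conjI allI impI ballI)
  fix U assume "U \<in> \<Inter>\<C>"
  then show "is_ultrafilter U" using assms unfolding uf_closed_def by blast
next
  fix U assume U: "is_ultrafilter U \<and> \<Inter>(\<Inter>\<C>) \<subseteq> U"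
  show "U \<in> \<Inter>\<C>"
  proof
    fix T assume T: "T \<in> \<C>"
    have "\<Inter>T \<subseteq> \<Inter>(\<Inter>\<C>)" using T by (intro Inter_anti_mono) blast
    then show "U \<in> T" using assms(2)[OF T] U unfolding uf_closed_def by (meson order_trans)
  qed
qed

text \<open>Compactness of \<open>\<beta>M\<close>.\<close>
lemma uf_closed_chain_Inter_nonempty:
  assumes \<C>: "\<C> \<noteq> {}" "subset.chain UNIV \<C>" "\<And>T. T \<in> \<C> \<Longrightarrow> uf_closed T \<and> T \<noteq> {}"
  shows "\<Inter>\<C> \<noteq> {}"
proof -
  have chain: "subset.chain UNIV (Inter ` \<C>)"
    using \<C>(2) unfolding subset_chain_def by (simp add: ball_simps) (metis Inter_anti_mono)
  have "fip (\<Union>(Inter ` \<C>))" unfolding fip_def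
  proof (intro allI impI)
    fix S assume S: "finite S \<and> S \<subseteq> \<Union>(Inter ` \<C>)"
    obtain B where "B \<in> Inter ` \<C>" "S \<subseteq> B"
      using finite_subset_Union_chain[of S "Inter ` \<C>" UNIV] S chain \<C>(1) by blast
    then obtain T where T: "T \<in> \<C>" "S \<subseteq> \<Inter>T" by blast
    then obtain U where U: "U \<in> T" "is_ultrafilter U"
      using \<C>(3)[OF T(1)] unfolding uf_closed_def by blast
    then have "S \<subseteq> U" using T(2) by blast
    then have "\<Inter>S \<in> U" using uf_Inter[of S U] S U(2) by blast
    then show "\<Inter>S \<noteq> {}" using uf_empty[OF U(2)] by metis
  qed
  then obtain W where W: "is_ultrafilter W" "\<Union>(Inter ` \<C>) \<subseteq> W" by (rule fip_imp_ultrafilter)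
  have "W \<in> T" if "T \<in> \<C>" for T
  proof -
    have "\<Inter>T \<subseteq> W" using W(2) that by blast
    then show ?thesis using \<C>(3)[OF that] W(1) unfolding uf_closed_def by blast
  qed
  then show ?thesis by blast
qed

text \<open>The core of the continuity of \<open>q \<mapsto> q p\<close>.\<close>
lemma fip_right_mult_closure:
  assumes T: "uf_closed T" and p: "is_ultrafilter p" and V: "is_ultrafilter V"
    and closure: "\<Inter>((\<lambda>U. uf_mult U p) ` T) \<subseteq> V"
  shows "fip (\<Inter>T \<union> uf_quot p ` V)"
  unfolding fip_def
proof (intro allI impI notI)
  fix S assume S: "finite S \<and> S \<subseteq> \<Inter>T \<union> uf_quot p ` V" and empty: "\<Inter>S = {}"
  have "finite (S - \<Inter>T)" "S - \<Inter>T \<subseteq> uf_quot p ` V" using S by auto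
  then obtain \<B> where \<B>: "\<B> \<subseteq> V" "finite \<B>" "S - \<Inter>T = uf_quot p ` \<B>"
    using finite_subset_image[of "S - \<Inter>T" "uf_quot p" V] by blast
  have BV: "\<Inter>\<B> \<in> V" using uf_Inter \<B> V by blast
  have quot_Inter: "uf_quot p (\<Inter>\<B>) \<subseteq> uf_quot p B" if "B \<in> \<B>" for B
    using uf_quot_mono[OF p] that by blast
  have "\<Inter>(S \<inter> \<Inter>T) \<inter> uf_quot p (\<Inter>\<B>) \<subseteq> \<Inter>S"
  proof (intro subsetI InterI)
    fix z X assume z: "z \<in> \<Inter>(S \<inter> \<Inter>T) \<inter> uf_quot p (\<Inter>\<B>)" and X: "X \<in> S"
    show "z \<in> X"
    proof (cases "X \<in> \<Inter>T")
      case True then show ?thesis using z X by blast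
    next
      case False
      then obtain B where "B \<in> \<B>" "X = uf_quot p B" using X \<B>(3) by blast
      then show ?thesis using z quot_Inter by blast
    qed
  qed
  then have disj: "\<Inter>(S \<inter> \<Inter>T) \<inter> uf_quot p (\<Inter>\<B>) = {}" using empty by blast
  have "- \<Inter>\<B> \<in> uf_mult U p" if U: "U \<in> T" for U
  proof -
    have Uu: "is_ultrafilter U" using T U unfolding uf_closed_def by blast
    have "\<Inter>(S \<inter> \<Inter>T) \<in> U" using uf_Inter[OF _ Uu] S U by blast
    then have "uf_quot p (\<Inter>\<B>) \<notin> U" using disj uf_empty[OF Uu] uf_Int[OF Uu] by metis
    then show ?thesis using in_uf_mult uf_quot_Compl[OF p] uf_Compl_iff[OF Uu] by metis
  qed
  then have "- \<Inter>\<B> \<in> V" using closure by blast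
  then show False using BV V uf_Compl_iff by blast
qed

lemma uf_closed_image_right_mult:
  assumes T: "uf_closed T" and p: "is_ultrafilter p"
  shows "uf_closed ((\<lambda>U. uf_mult U p) ` T)"
  unfolding uf_closed_def
proof (intro conjI allI impI ballI)
  fix V assume "V \<in> (\<lambda>U. uf_mult U p) ` T"
  then show "is_ultrafilter V" using T p is_ultrafilter_uf_mult unfolding uf_closed_def by blast
next
  fix V assume V: "is_ultrafilter V \<and> \<Inter>((\<lambda>U. uf_mult U p) ` T) \<subseteq> V"
  then obtain W where W: "is_ultrafilter W" "\<Inter>T \<union> uf_quot p ` V \<subseteq> W"
    using fip_imp_ultrafilter fip_right_mult_closure[OF T p] by metis
  have "V \<subseteq> uf_mult W p" using W in_uf_mult by blast
  then have "V = uf_mult W p" using uf_eqI V is_ultrafilter_uf_mult W p by blast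
  moreover have "W \<in> T" using T W unfolding uf_closed_def by blast
  ultimately show "V \<in> (\<lambda>U. uf_mult U p) ` T" by blast
qed

lemma uf_closed_right_stabilizer:
  assumes p: "is_ultrafilter p"
  shows "uf_closed {q. is_ultrafilter q \<and> uf_mult q p = p}"
proof -
  have "uf_mult q p = p \<longleftrightarrow> uf_quot p ` p \<subseteq> q" if "is_ultrafilter q" for q
    using uf_eqI[OF p is_ultrafilter_uf_mult[OF that p]] in_uf_mult[of _ q p] by blast
  then have "{q. is_ultrafilter q \<and> uf_mult q p = p} = {q. is_ultrafilter q \<and> uf_quot p ` p \<subseteq> q}"
    by blast
  then show ?thesis using uf_closed_extensions[of "uf_quot p ` p"] by simp
qed

section \<open>The Ellis--Numakura lemma\<close>

definition closed_subsemigroup :: "'a::semigroup_mult set set set \<Rightarrow> bool" where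
  "closed_subsemigroup T \<longleftrightarrow> T \<noteq> {} \<and> uf_closed T \<and> (\<forall>U\<in>T. \<forall>V\<in>T. uf_mult U V \<in> T)"

lemma subset_Zorn_minimal:
  assumes "\<A> \<noteq> {}" and chain: "\<And>\<C>. \<C> \<noteq> {} \<Longrightarrow> subset.chain \<A> \<C> \<Longrightarrow> \<Inter>\<C> \<in> \<A>"
  shows "\<exists>M\<in>\<A>. \<forall>X\<in>\<A>. X \<subseteq> M \<longrightarrow> X = M"
proof -
  have "\<exists>M\<in>uminus ` \<A>. \<forall>X\<in>uminus ` \<A>. M \<subseteq> X \<longrightarrow> X = M"
  proof (rule subset_Zorn_nonempty)
    fix \<C> assume \<C>: "\<C> \<noteq> {}" "subset.chain (uminus ` \<A>) \<C>"
    have "subset.chain \<A> (uminus ` \<C>)" using \<C>(2) unfolding subset_chain_def by auto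
    then have "\<Inter>(uminus ` \<C>) \<in> \<A>" by (rule chain[rotated]) (use \<C>(1) in simp)
    moreover have "\<Union>\<C> = - \<Inter>(uminus ` \<C>)" by auto
    ultimately show "\<Union>\<C> \<in> uminus ` \<A>" by blast
  qed (use assms in blast)
  then obtain M where M: "M \<in> \<A>" and max: "\<And>X. X \<in> \<A> \<Longrightarrow> - M \<subseteq> - X \<Longrightarrow> - X = - M"
    by (metis imageE image_eqI)
  have "X = M" if "X \<in> \<A>" "X \<subseteq> M" for X
    using max[OF that(1)] that(2) by simp
  then show ?thesis using M by blast
qed

lemma minimal_closed_subsemigroup_exists:
  assumes "closed_subsemigroup S"
  shows "\<exists>T\<subseteq>S. closed_subsemigroup T \<and> (\<forall>X\<subseteq>T. closed_subsemigroup X \<longrightarrow> X = T)"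
proof -
  let ?\<A> = "{T. T \<subseteq> S \<and> closed_subsemigroup T}"
  have "\<exists>M\<in>?\<A>. \<forall>X\<in>?\<A>. X \<subseteq> M \<longrightarrow> X = M"
  proof (rule subset_Zorn_minimal)
    fix \<C> assume \<C>: "\<C> \<noteq> {}" "subset.chain ?\<A> \<C>"
    then have members: "T \<subseteq> S \<and> closed_subsemigroup T" if "T \<in> \<C>" for T
      using that unfolding subset_chain_def by blast
    have "\<Inter>\<C> \<noteq> {}"
      using \<C> members uf_closed_chain_Inter_nonempty[of \<C>]
      unfolding subset_chain_def closed_subsemigroup_def by blast
    moreover have "uf_closed (\<Inter>\<C>)"
      using uf_closed_Inter[OF \<C>(1)] members unfolding closed_subsemigroup_def by blast
    moreover have "\<Inter>\<C> \<subseteq> S" using \<C>(1) members by blast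
    moreover have "\<forall>U\<in>\<Inter>\<C>. \<forall>V\<in>\<Inter>\<C>. uf_mult U V \<in> \<Inter>\<C>"
      using members unfolding closed_subsemigroup_def by blast
    ultimately show "\<Inter>\<C> \<in> ?\<A>" unfolding closed_subsemigroup_def by blast
  qed (use assms in blast)
  then obtain T where T: "T \<in> ?\<A>" and min: "\<forall>X\<in>?\<A>. X \<subseteq> T \<longrightarrow> X = T"
    by blast
  have "X = T" if "X \<subseteq> T" "closed_subsemigroup X" for X
  proof -
    have "X \<in> ?\<A>" using that T by auto
    then show ?thesis using min that(1) by blast
  qed
  then show ?thesis using T by blast
qed

text \<open>For \<open>p \<in> T\<close>, both \<open>T p\<close> and \<open>{q \<in> T. q p = p}\<close> are closed subsemigroups of \<open>T\<close>; by
  minimality the first gives \<open>q p = p\<close> for some \<open>q \<in> T\<close>, so the second is nonempty and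
  equals \<open>T \<ni> p\<close>.\<close>
lemma minimal_closed_subsemigroup_idempotent:
  assumes T: "closed_subsemigroup T"
    and min: "\<And>X. X \<subseteq> T \<Longrightarrow> closed_subsemigroup X \<Longrightarrow> X = T"
    and pT: "p \<in> T"
  shows "uf_mult p p = p"
proof -
  have Tu: "\<And>U. U \<in> T \<Longrightarrow> is_ultrafilter U"
    and mult: "\<And>U V. U \<in> T \<Longrightarrow> V \<in> T \<Longrightarrow> uf_mult U V \<in> T"
    using T unfolding closed_subsemigroup_def uf_closed_def by blast+
  have p: "is_ultrafilter p" using Tu pT by blast
  let ?Tp = "(\<lambda>U. uf_mult U p) ` T"
  have "closed_subsemigroup ?Tp" unfolding closed_subsemigroup_def
  proof (intro conjI ballI)
    fix U V assume "U \<in> ?Tp" "V \<in> ?Tp"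
    then obtain u v where uv: "u \<in> T" "v \<in> T" "U = uf_mult u p" "V = uf_mult v p" by blast
    then have "uf_mult U V = uf_mult (uf_mult (uf_mult u p) v) p" by (simp add: uf_mult_assoc)
    then show "uf_mult U V \<in> ?Tp" using mult uv pT by blast
  qed (use T p uf_closed_image_right_mult pT in \<open>auto simp: closed_subsemigroup_def\<close>)
  moreover have "?Tp \<subseteq> T" using mult pT by blast
  ultimately have "?Tp = T" using min by blast
  then obtain q where q: "q \<in> T" "uf_mult q p = p" using pT by (metis imageE)
  let ?X = "T \<inter> {q. is_ultrafilter q \<and> uf_mult q p = p}"
  have "closed_subsemigroup ?X" unfolding closed_subsemigroup_def
  proof (intro conjI ballI)
    fix U V assume "U \<in> ?X" "V \<in> ?X"
    then show "uf_mult U V \<in> ?X" using mult Tu by (simp add: uf_mult_assoc)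
  qed (use T uf_closed_Int uf_closed_right_stabilizer[OF p] q Tu in
       \<open>auto simp: closed_subsemigroup_def\<close>)
  then have "?X = T" using min by blast
  then show ?thesis using pT by blast
qed

theorem Ellis_Numakura:
  assumes "closed_subsemigroup S"
  shows "\<exists>U\<in>S. uf_mult U U = U"
proof -
  obtain T where T: "T \<subseteq> S" "closed_subsemigroup T" "\<forall>X\<subseteq>T. closed_subsemigroup X \<longrightarrow> X = T"
    using minimal_closed_subsemigroup_exists[OF assms] by blast
  then obtain p where "p \<in> T" unfolding closed_subsemigroup_def by blast
  then show ?thesis using minimal_closed_subsemigroup_idempotent[of T p] T by blast
qed

lemma lprod_append: "xs \<noteq> [] \<Longrightarrow> ys \<noteq> [] \<Longrightarrow> lprod (xs @ ys) = lprod xs * lprod ys"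
proof (induction xs rule: lprod.induct)
  case (1 a) then show ?case by (cases ys) auto
next
  case (2 a b l) then show ?case by (simp add: mult.assoc)
qed simp

lemma injective_FP_subset_of_shrinking:
  assumes x: "\<And>n. x n \<in> C n"
    and shrink: "\<And>n. C (Suc n) \<subseteq> C n \<inter> left_quot (x n) (C n) - {x n}"
  shows "inj x" and "FP x \<subseteq> C 0"
proof -
  have "C (Suc n) \<subseteq> C n" for n using shrink by blast
  then have antimono: "m \<le> n \<Longrightarrow> C n \<subseteq> C m" for m n by (rule lift_Suc_antimono_le)
  have x_notin_later: "x n \<notin> C m" if "n < m" for n m
    using shrink[of n] antimono[of "Suc n" m] that by auto
  show "inj x"
  proof (rule injI)
    fix m n assume "x m = x n"
    then show "m = n" using x_notin_later x by (metis linorder_neqE_nat)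
  qed
  have "lprod (map x is) \<in> C (hd is)" if "is \<noteq> []" "sorted_wrt (<) is" for "is"
    using that
  proof (induction "is" rule: lprod.induct)
    case (2 a b l)
    then have "lprod (map x (b # l)) \<in> C (Suc a)" using antimono[of "Suc a" b] by auto
    then show ?case using shrink by auto
  qed (use x in auto)
  then show "FP x \<subseteq> C 0" unfolding FP_def using antimono[of 0] by blast
qed

section \<open>Idempotent ultrafilters contain DIP sets\<close>

definition uf_star :: "'a::semigroup_mult set set \<Rightarrow> 'a set \<Rightarrow> 'a set" where
  "uf_star U B = {y \<in> B. left_quot y B \<in> U}"

lemma uf_star_subset: "uf_star U B \<subseteq> B"
  unfolding uf_star_def by blast

context
  fixes U :: "'a::semigroup_mult set set"
  assumes U: "is_ultrafilter U" "idempotent_uf U"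
begin

lemma uf_star_in: "B \<in> U \<Longrightarrow> uf_star U B \<in> U"
proof -
  assume B: "B \<in> U"
  then have "uf_quot U B \<in> U" using U(2) in_uf_mult unfolding idempotent_uf_def by metis
  then have "B \<inter> uf_quot U B \<in> U" using B uf_Int[OF U(1)] by blast
  moreover have "B \<inter> uf_quot U B = uf_star U B" unfolding uf_star_def by blast
  ultimately show ?thesis by simp
qed

lemma uf_star_left_quot: "y \<in> uf_star U B \<Longrightarrow> left_quot y (uf_star U B) \<in> U"
proof -
  assume y: "y \<in> uf_star U B"
  then have yB: "left_quot y B \<in> U" unfolding uf_star_def by blast
  have "uf_star U (left_quot y B) \<subseteq> uf_quot U (left_quot y B)"
    unfolding uf_star_def by blast
  then have "uf_quot U (left_quot y B) \<in> U" using uf_star_in[OF yB] uf_mono[OF U(1)] by blast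
  then have "uf_quot U (left_quot y B) \<inter> left_quot y B \<in> U" using yB uf_Int[OF U(1)] by blast
  moreover have "uf_quot U (left_quot y B) \<inter> left_quot y B = left_quot y (uf_star U B)"
    by (auto simp: uf_star_def mult.assoc)
  ultimately show ?thesis by simp
qed

text \<open>Each \<open>C n\<close> is a set of the form \<open>B\<^sup>*\<close> with \<open>B \<in> U\<close>, which gives the invariant
  \<open>C n \<in> U \<and> (\<forall>y \<in> C n. y\<^sup>-\<^sup>1C n \<in> U)\<close>.\<close>
lemma idempotent_uf_shrinking_sequence:
  assumes np: "nonprincipal U" and A: "A \<in> U"
  obtains x C where "\<And>n. x n \<in> C n" "\<And>n. C (Suc n) \<subseteq> C n \<inter> left_quot (x n) (C n) - {x n}"
    "C 0 \<subseteq> A"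
proof -
  define pick :: "'a set \<Rightarrow> 'a" where "pick D = (SOME y. y \<in> D)" for D
  define C where "C n = rec_nat (uf_star U A)
      (\<lambda>_ D. uf_star U (D \<inter> left_quot (pick D) D - {pick D})) n" for n
  have pick: "pick D \<in> D" if "D \<in> U" for D
    using uf_empty[OF U(1)] that unfolding pick_def by (metis ex_in_conv someI_ex)
  have inv: "C n \<in> U \<and> (\<forall>y\<in>C n. left_quot y (C n) \<in> U)" for n
  proof (induction n)
    case 0 show ?case using A uf_star_in uf_star_left_quot by (simp add: C_def)
  next
    case (Suc n)
    then have "C n \<inter> left_quot (pick (C n)) (C n) - {pick (C n)} \<in> U"
      using pick nonprincipal_Compl_singleton[OF U(1) np] uf_Int[OF U(1)]
      by (simp add: Diff_eq)
    then show ?case using uf_star_in uf_star_left_quot by (simp add: C_def)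
  qed
  show ?thesis
  proof (rule that[of "\<lambda>n. pick (C n)" C])
    show "pick (C n) \<in> C n" for n using pick inv by blast
    show "C (Suc n) \<subseteq> C n \<inter> left_quot (pick (C n)) (C n) - {pick (C n)}" for n
      using uf_star_subset by (simp add: C_def)
    show "C 0 \<subseteq> A" using uf_star_subset by (simp add: C_def)
  qed
qed

lemma DIP_if_idempotent_uf:
  assumes "nonprincipal U" "A \<in> U"
  shows "DIP A"
proof -
  obtain x C where x: "\<And>n. x n \<in> C n"
    and shrink: "\<And>n. C (Suc n) \<subseteq> C n \<inter> left_quot (x n) (C n) - {x n}" and "C 0 \<subseteq> A"
    using idempotent_uf_shrinking_sequence[OF assms] by blast
  then show ?thesis
    using injective_FP_subset_of_shrinking[of x C, OF x shrink] unfolding DIP_def by blast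
qed

end

section \<open>DIP sets lie in idempotent ultrafilters\<close>

definition FP_tail :: "(nat \<Rightarrow> 'a::semigroup_mult) \<Rightarrow> nat \<Rightarrow> 'a set" where
  "FP_tail x m = {lprod (map x is) | is. is \<noteq> [] \<and> sorted_wrt (<) is \<and> (\<forall>i\<in>set is. m \<le> i)}"

lemma FP_tail_0: "FP_tail x 0 = FP x"
  unfolding FP_tail_def FP_def by simp

lemma FP_tail_antimono: "m \<le> n \<Longrightarrow> FP_tail x n \<subseteq> FP_tail x m"
  unfolding FP_tail_def by fastforce

lemma infinite_FP_tail:
  assumes "inj x"
  shows "infinite (FP_tail x m)"
proof
  assume fin: "finite (FP_tail x m)"
  have "x ` {m..} \<subseteq> FP_tail x m"
    unfolding FP_tail_def by (auto intro!: exI[of _ "[_]"])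
  then have "finite (x ` {m..})" using fin finite_subset by blast
  then have "finite {m..}" using assms finite_imageD inj_on_subset by blast
  then show False using infinite_Ici by blast
qed

lemma FP_tail_left_quot:
  assumes "y \<in> FP_tail x m"
  obtains k where "FP_tail x k \<subseteq> left_quot y (FP_tail x m)"
proof -
  obtain "is" where y: "y = lprod (map x is)" "is \<noteq> []" "sorted_wrt (<) is" "\<forall>i\<in>set is. m \<le> i"
    using assms unfolding FP_tail_def by blast
  have "FP_tail x (Suc (Max (set is))) \<subseteq> left_quot y (FP_tail x m)"
  proof
    fix z assume "z \<in> FP_tail x (Suc (Max (set is)))"
    then obtain js where z: "z = lprod (map x js)" "js \<noteq> []" "sorted_wrt (<) js"
      "\<forall>j\<in>set js. Suc (Max (set is)) \<le> j"
      unfolding FP_tail_def by blast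
    have lt: "\<forall>i\<in>set is. \<forall>j\<in>set js. i < j"
      using z(4) by (meson List.finite_set Max_ge le_less_trans lessI less_eq_Suc_le)
    have "y * z = lprod (map x (is @ js))" using y z by (simp add: lprod_append)
    moreover have "sorted_wrt (<) (is @ js)" using y z lt by (simp add: sorted_wrt_append)
    moreover have "\<forall>i\<in>set (is @ js). m \<le> i"
      using y(2,4) lt by (metis Un_iff hd_in_set less_imp_le order_trans set_append)
    ultimately show "z \<in> left_quot y (FP_tail x m)" unfolding FP_tail_def using y(2) by blast
  qed
  then show ?thesis by (rule that)
qed

lemma FP_tail_minus_finite_subset:
  assumes "finite S" "S \<subseteq> range (FP_tail x) \<union> range (\<lambda>a. - {a})"
  shows "\<exists>m F. finite F \<and> FP_tail x m - F \<subseteq> \<Inter>S"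
  using assms
proof (induction S rule: finite_induct)
  case empty
  have "FP_tail x 0 - {} \<subseteq> \<Inter>{}" by simp
  then show ?case by blast
next
  case (insert B S)
  then obtain m F where F: "finite F" "FP_tail x m - F \<subseteq> \<Inter>S" by auto
  have "\<exists>m' F'. finite F' \<and> FP_tail x m' - F' \<subseteq> B"
  proof -
    consider k where "B = FP_tail x k" | a where "B = - {a}" using insert.prems by blast
    then show ?thesis
    proof cases
      case (1 k) then show ?thesis by (intro exI[of _ k] exI[of _ "{}"]) simp
    next
      case (2 a) then show ?thesis by (intro exI[of _ 0] exI[of _ "{a}"]) auto
    qed
  qed
  then obtain m' F' where F': "finite F'" "FP_tail x m' - F' \<subseteq> B" by blast
  have "FP_tail x (max m m') - (F \<union> F') \<subseteq> \<Inter>(insert B S)"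
    using F(2) F'(2) FP_tail_antimono[of m "max m m'" x] FP_tail_antimono[of m' "max m m'" x]
    by auto
  then show ?case using F(1) F'(1) by (intro exI[of _ "max m m'"] exI[of _ "F \<union> F'"]) simp
qed

lemma FP_tail_mult_mem:
  assumes U: "is_ultrafilter U" "\<And>m. FP_tail x m \<in> U"
    and V: "is_ultrafilter V" "\<And>m. FP_tail x m \<in> V"
  shows "FP_tail x m \<in> uf_mult U V"
proof -
  have "FP_tail x m \<subseteq> uf_quot V (FP_tail x m)"
  proof
    fix y assume "y \<in> FP_tail x m"
    then obtain k where "FP_tail x k \<subseteq> left_quot y (FP_tail x m)" by (rule FP_tail_left_quot)
    then show "y \<in> uf_quot V (FP_tail x m)" using uf_mono[OF V(1) V(2)[of k]] by simp
  qed
  then show ?thesis using uf_mono[OF U(1) U(2)[of m]] by (simp add: in_uf_mult)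
qed

text \<open>This is the only place where the semigroup needs to be moving.\<close>
lemma FP_tail_ultrafilters_closed_subsemigroup:
  fixes x :: "nat \<Rightarrow> 'a::semigroup_mult"
  assumes moving: "moving TYPE('a)" and x: "inj x"
  shows "closed_subsemigroup {U. is_ultrafilter U \<and> nonprincipal U \<and> (\<forall>m. FP_tail x m \<in> U)}"
    (is "closed_subsemigroup ?S")
proof -
  let ?G = "range (FP_tail x) \<union> range (\<lambda>a. - {a})"
  have "nonprincipal U \<longleftrightarrow> range (\<lambda>a. - {a}) \<subseteq> U" if "is_ultrafilter U" for U
    using nonprincipalI[of U] nonprincipal_Compl_singleton[OF that] by blast
  then have S_eq: "?S = {U. is_ultrafilter U \<and> ?G \<subseteq> U}" by auto
  have "fip ?G" unfolding fip_def
  proof (intro allI impI)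
    fix S assume S: "finite S \<and> S \<subseteq> ?G"
    then obtain m F where F: "finite F" "FP_tail x m - F \<subseteq> \<Inter>S"
      using FP_tail_minus_finite_subset[of S x] by blast
    have "FP_tail x m - F \<noteq> {}"
      using infinite_FP_tail[OF x] F(1) by (metis Diff_eq_empty_iff finite_subset)
    then show "\<Inter>S \<noteq> {}" using F(2) by blast
  qed
  then obtain U where "is_ultrafilter U" "?G \<subseteq> U" by (rule fip_imp_ultrafilter)
  then have "?S \<noteq> {}" unfolding S_eq by blast
  moreover have "uf_closed ?S" unfolding S_eq by (rule uf_closed_extensions)
  moreover have "uf_mult U V \<in> ?S" if U: "U \<in> ?S" and V: "V \<in> ?S" for U V
  proof -
    have "nonprincipal (uf_mult U V)" using moving U V unfolding moving_def by blast
    moreover have "FP_tail x m \<in> uf_mult U V" for m using U V by (intro FP_tail_mult_mem) auto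
    ultimately show ?thesis using U V is_ultrafilter_uf_mult by blast
  qed
  ultimately show ?thesis unfolding closed_subsemigroup_def by blast
qed

lemma idempotent_uf_if_DIP:
  fixes A :: "'a::semigroup_mult set"
  assumes moving: "moving TYPE('a)" and "DIP A"
  obtains U where "is_ultrafilter U" "nonprincipal U" "idempotent_uf U" "A \<in> U"
proof -
  obtain x where x: "inj x" "FP x \<subseteq> A" using \<open>DIP A\<close> unfolding DIP_def by blast
  obtain U where U: "is_ultrafilter U" "nonprincipal U" "FP_tail x 0 \<in> U" "uf_mult U U = U"
    using Ellis_Numakura[OF FP_tail_ultrafilters_closed_subsemigroup[OF moving x(1)]] by blast
  then have "A \<in> U" using x(2) FP_tail_0 uf_mono by metis
  then show ?thesis using that U unfolding idempotent_uf_def by blast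
qed

theorem mainTheorem2:
  fixes A :: "'a::semigroup_mult set"
  assumes "moving TYPE('a)"
  shows "DIP A \<longleftrightarrow>
    (\<exists>U. is_ultrafilter U \<and> nonprincipal U \<and> idempotent_uf U \<and> A \<in> U)"
  using idempotent_uf_if_DIP[OF assms] DIP_if_idempotent_uf by blast

end
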